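(* Let $F$ be a scalar group, $I$ an index set, and $\{V_i\}_{i\in I}$ a family of near-vector spaces over $F$. Let $\bigoplus_{i\in I}V_i=\{(v_i)_{i\in I}\in\prod_{i\in I}V_i : v_i=0\text{ for all but finitely many } i\}$, with componentwise addition and scalar multiplication, and for each $i\in I$ let $\iota_i:V_i\to\bigoplus_{j\in I}V_j$ send $v$ to the family whose $i$-th entry is $v$ and all other entries are $0$. Then: (1) $\bigoplus_{i\in I}V_i$ is a near-vector space over $F$ and each $\iota_i$ is $F$-linear; (2) $\bigl(\bigoplus_{i\in I}V_i,\{\iota_i\}_{i\in I}\bigr)$ is a coproduct of the family $\{V_i\}_{i\in I}$ in the category of near-vector spaces over $F$ (with $F$-linear maps as morphisms).
   Context: A scalar group is a tuple $(F,\cdot,1,0,-1)$ where $(F,\cdot,1)$ is a monoid, $0\cdot\alpha=0=\alpha\cdot0$, $\{\pm1\}$ is the solution set of $x^2=1$, and $F\setminus\{0\}$ is a group under $\cdot$. An $F$-space is an abelian group $V$ with a left action of $(F,\cdot)$ by group endomorphisms such that $0,1,-1$ act as $0,\mathrm{id},-\mathrm{id}$. The quasi-kernel is $Q(V)=\{u\in V:\forall\alpha,\beta\in F\ \exists\gamma\in F,\ \alpha u+\beta u=\gamma u\}$. A near-vector space over $F$ is an $F$-space with free action (for $u\ne0$, $\alpha u=\beta u\Rightarrow\alpha=\beta$) such that $Q(V)$ generates $V$ as an additive group. An $F$-linear map is an additive homomorphism $\phi$ with $\phi(\alpha u)=\alpha\phi(u)$ for all $\alpha\in F$. *)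

theory Defs
  imports "HOL-Algebra.Algebra"
begin

text \<open>A scalar group is represented by a HOL-Algebra monoid F (multiplication, 1)
  together with distinguished elements z (the zero 0) and n (the element -1).\<close>

definition scalar_group :: "'f monoid \<Rightarrow> 'f \<Rightarrow> 'f \<Rightarrow> bool" where
  "scalar_group F z n \<longleftrightarrow>
     monoid F \<and> z \<in> carrier F \<and> n \<in> carrier F \<and>
     (\<forall>a\<in>carrier F. z \<otimes>\<^bsub>F\<^esub> a = z \<and> a \<otimes>\<^bsub>F\<^esub> z = z) \<and>
     {x \<in> carrier F. x \<otimes>\<^bsub>F\<^esub> x = \<one>\<^bsub>F\<^esub>} = {\<one>\<^bsub>F\<^esub>, n} \<and>
     group (F\<lparr>carrier := carrier F - {z}\<rparr>)"

text \<open>An F-space: an abelian group written as a HOL-Algebra commutative (multiplicatively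
  written) group V (so the vector addition is the monoid operation, the zero vector is
  the unit, and negation is inv), together with a scalar action smult.\<close>

record ('f, 'v) fspace = "'v monoid" +
  smult :: "'f \<Rightarrow> 'v \<Rightarrow> 'v" (infixr "\<odot>\<index>" 75)

definition is_fspace :: "'f monoid \<Rightarrow> 'f \<Rightarrow> 'f \<Rightarrow> ('f, 'v) fspace \<Rightarrow> bool" where
  "is_fspace F z n V \<longleftrightarrow>
     comm_group V \<and>
     (\<forall>a\<in>carrier F. \<forall>v\<in>carrier V. a \<odot>\<^bsub>V\<^esub> v \<in> carrier V) \<and>
     (\<forall>a\<in>carrier F. \<forall>u\<in>carrier V. \<forall>v\<in>carrier V.
        a \<odot>\<^bsub>V\<^esub> (u \<otimes>\<^bsub>V\<^esub> v) = (a \<odot>\<^bsub>V\<^esub> u) \<otimes>\<^bsub>V\<^esub> (a \<odot>\<^bsub>V\<^esub> v)) \<and>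
     (\<forall>a\<in>carrier F. \<forall>b\<in>carrier F. \<forall>v\<in>carrier V.
        (a \<otimes>\<^bsub>F\<^esub> b) \<odot>\<^bsub>V\<^esub> v = a \<odot>\<^bsub>V\<^esub> (b \<odot>\<^bsub>V\<^esub> v)) \<and>
     (\<forall>v\<in>carrier V. \<one>\<^bsub>F\<^esub> \<odot>\<^bsub>V\<^esub> v = v) \<and>
     (\<forall>v\<in>carrier V. z \<odot>\<^bsub>V\<^esub> v = \<one>\<^bsub>V\<^esub>) \<and>
     (\<forall>v\<in>carrier V. n \<odot>\<^bsub>V\<^esub> v = inv\<^bsub>V\<^esub> v)"

definition quasi_kernel :: "'f monoid \<Rightarrow> ('f, 'v) fspace \<Rightarrow> 'v set" where
  "quasi_kernel F V = {u \<in> carrier V. \<forall>a\<in>carrier F. \<forall>b\<in>carrier F.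
      \<exists>c\<in>carrier F. (a \<odot>\<^bsub>V\<^esub> u) \<otimes>\<^bsub>V\<^esub> (b \<odot>\<^bsub>V\<^esub> u) = c \<odot>\<^bsub>V\<^esub> u}"

definition near_vector_space :: "'f monoid \<Rightarrow> 'f \<Rightarrow> 'f \<Rightarrow> ('f, 'v) fspace \<Rightarrow> bool" where
  "near_vector_space F z n V \<longleftrightarrow>
     is_fspace F z n V \<and>
     (\<forall>u\<in>carrier V. u \<noteq> \<one>\<^bsub>V\<^esub> \<longrightarrow>
        (\<forall>a\<in>carrier F. \<forall>b\<in>carrier F. a \<odot>\<^bsub>V\<^esub> u = b \<odot>\<^bsub>V\<^esub> u \<longrightarrow> a = b)) \<and>
     generate V (quasi_kernel F V) = carrier V"

definition linear_map :: "'f monoid \<Rightarrow> ('f, 'v) fspace \<Rightarrow> ('f, 'w) fspace \<Rightarrow> ('v \<Rightarrow> 'w) \<Rightarrow> bool" where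
  "linear_map F V W \<phi> \<longleftrightarrow>
     \<phi> \<in> hom V W \<and>
     (\<forall>a\<in>carrier F. \<forall>u\<in>carrier V. \<phi> (a \<odot>\<^bsub>V\<^esub> u) = a \<odot>\<^bsub>W\<^esub> \<phi> u)"

definition direct_sum :: "'i set \<Rightarrow> ('i \<Rightarrow> ('f, 'v) fspace) \<Rightarrow> ('f, 'i \<Rightarrow> 'v) fspace" where
  "direct_sum I V =
     \<lparr> partial_object.carrier = {x \<in> (\<Pi>\<^sub>E i\<in>I. carrier (V i)). finite {i \<in> I. x i \<noteq> \<one>\<^bsub>V i\<^esub>}},
       monoid.mult = (\<lambda>x y. \<lambda>i\<in>I. x i \<otimes>\<^bsub>V i\<^esub> y i),
       monoid.one = (\<lambda>i\<in>I. \<one>\<^bsub>V i\<^esub>),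
       fspace.smult = (\<lambda>a x. \<lambda>i\<in>I. a \<odot>\<^bsub>V i\<^esub> x i) \<rparr>"

definition ds_inj :: "'i set \<Rightarrow> ('i \<Rightarrow> ('f, 'v) fspace) \<Rightarrow> 'i \<Rightarrow> 'v \<Rightarrow> ('i \<Rightarrow> 'v)" where
  "ds_inj I V i v = (\<lambda>j\<in>I. if j = i then v else \<one>\<^bsub>V j\<^esub>)"

end

theory Submission
  imports Defs
begin

text \<open>Forgetting the scalars, the direct sum is the restricted product \<^const>\<open>sum_group\<close>
  of HOL-Algebra, and the scalars act componentwise; so the F-space axioms hold componentwise,
  and the action is free because a nonzero element has a nonzero component.
  A linear map sends the quasi-kernel into the quasi-kernel, so the injection \<open>\<iota>\<^sub>i\<close> sends
  \<open>V\<^sub>i = \<langle>Q(V\<^sub>i)\<rangle>\<close> into \<open>\<langle>Q(\<Oplus>V\<^sub>i)\<rangle>\<close>; as the images of the injections generate the direct sum,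
  \<open>Q(\<Oplus>V\<^sub>i)\<close> generates it.
  Given linear maps \<open>f\<^sub>i\<close>, the finite sum \<open>x \<mapsto> \<Sum>\<^sub>i f\<^sub>i(x\<^sub>i)\<close> is the induced morphism,
  and it is unique because the images of the injections generate.\<close>

lemma comm_group_truncate_iff: "comm_group (monoid.truncate G) \<longleftrightarrow> comm_group G"
  unfolding comm_group_def comm_monoid_def comm_monoid_axioms_def group_def group_axioms_def
    monoid_def Units_def
  by (simp add: monoid.truncate_def)

lemma m_inv_truncate: "inv\<^bsub>monoid.truncate G\<^esub> x = inv\<^bsub>G\<^esub> x"
  by (simp add: m_inv_def monoid.truncate_def)

lemma hom_truncate: "hom (monoid.truncate G) H = hom G H"
  by (simp add: hom_def monoid.truncate_def)

lemma fspace_smult_closed: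
  fixes V :: "('f, 'v) fspace"
  shows "is_fspace F z n V \<Longrightarrow> a \<in> carrier F \<Longrightarrow> v \<in> carrier V \<Longrightarrow> a \<odot>\<^bsub>V\<^esub> v \<in> carrier V"
  by (simp add: is_fspace_def)

lemma fspace_smult_hom:
  fixes V :: "('f, 'v) fspace"
  assumes "is_fspace F z n V" and "a \<in> carrier F"
  shows "(\<lambda>v. a \<odot>\<^bsub>V\<^esub> v) \<in> hom V V"
  using assms by (auto simp: is_fspace_def intro: homI)

lemma fspace_smult_one:
  fixes V :: "('f, 'v) fspace"
  assumes V: "is_fspace F z n V" and a: "a \<in> carrier F"
  shows "a \<odot>\<^bsub>V\<^esub> \<one>\<^bsub>V\<^esub> = \<one>\<^bsub>V\<^esub>"
proof -
  have "group V" using V by (simp add: is_fspace_def comm_group.axioms(2))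
  with hom_one[OF fspace_smult_hom[OF V a]] show ?thesis by blast
qed

definition free_action :: "'f monoid \<Rightarrow> ('f, 'v) fspace \<Rightarrow> bool" where
  "free_action F V \<longleftrightarrow> (\<forall>u\<in>carrier V. u \<noteq> \<one>\<^bsub>V\<^esub> \<longrightarrow>
     (\<forall>a\<in>carrier F. \<forall>b\<in>carrier F. a \<odot>\<^bsub>V\<^esub> u = b \<odot>\<^bsub>V\<^esub> u \<longrightarrow> a = b))"

lemma near_vector_space_iff:
  "near_vector_space F z n V \<longleftrightarrow>
     is_fspace F z n V \<and> free_action F V \<and> generate V (quasi_kernel F V) = carrier V"
  by (simp add: near_vector_space_def free_action_def)

lemma linear_map_quasi_kernel:
  fixes V :: "('f, 'v) fspace" and W :: "('f, 'w) fspace"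
  assumes V: "is_fspace F z n V" and \<phi>: "linear_map F V W \<phi>"
  shows "\<phi> ` quasi_kernel F V \<subseteq> quasi_kernel F W"
proof
  fix w assume "w \<in> \<phi> ` quasi_kernel F V"
  then obtain u where u: "u \<in> quasi_kernel F V" and w: "w = \<phi> u" by blast
  have u_V: "u \<in> carrier V" using u by (simp add: quasi_kernel_def)
  have hom: "\<phi> \<in> hom V W" and smult: "\<And>a. a \<in> carrier F \<Longrightarrow> \<phi> (a \<odot>\<^bsub>V\<^esub> u) = a \<odot>\<^bsub>W\<^esub> \<phi> u"
    using \<phi> u_V by (auto simp: linear_map_def)
  have "\<exists>c\<in>carrier F. (a \<odot>\<^bsub>W\<^esub> w) \<otimes>\<^bsub>W\<^esub> (b \<odot>\<^bsub>W\<^esub> w) = c \<odot>\<^bsub>W\<^esub> w"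
    if a: "a \<in> carrier F" and b: "b \<in> carrier F" for a b
  proof -
    obtain c where c: "c \<in> carrier F" "(a \<odot>\<^bsub>V\<^esub> u) \<otimes>\<^bsub>V\<^esub> (b \<odot>\<^bsub>V\<^esub> u) = c \<odot>\<^bsub>V\<^esub> u"
      using u a b by (auto simp: quasi_kernel_def)
    have "(a \<odot>\<^bsub>W\<^esub> w) \<otimes>\<^bsub>W\<^esub> (b \<odot>\<^bsub>W\<^esub> w) = \<phi> ((a \<odot>\<^bsub>V\<^esub> u) \<otimes>\<^bsub>V\<^esub> (b \<odot>\<^bsub>V\<^esub> u))"
      using a b u_V by (simp add: w smult hom_mult[OF hom] fspace_smult_closed[OF V])
    also have "\<dots> = c \<odot>\<^bsub>W\<^esub> w" by (simp add: c w smult)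
    finally show ?thesis using c(1) by blast
  qed
  moreover have "w \<in> carrier W" using hom u_V by (simp add: w hom_in_carrier)
  ultimately show "w \<in> quasi_kernel F W" by (simp add: quasi_kernel_def)
qed

lemma linear_map_generate_quasi_kernel:
  assumes V: "is_fspace F z n V" and W: "is_fspace F z n W" and \<phi>: "linear_map F V W \<phi>"
  shows "\<phi> ` generate V (quasi_kernel F V) \<subseteq> generate W (quasi_kernel F W)"
proof -
  interpret group_hom V W \<phi>
    using V W \<phi> by (simp add: group_hom_def group_hom_axioms_def is_fspace_def linear_map_def
        comm_group.axioms(2))
  have "quasi_kernel F V \<subseteq> carrier V" by (auto simp: quasi_kernel_def)
  then have "\<phi> ` generate V (quasi_kernel F V) = generate W (\<phi> ` quasi_kernel F V)"
    by (rule generate_img[symmetric])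
  also have "\<dots> \<subseteq> generate W (quasi_kernel F W)"
    by (rule H.mono_generate[OF linear_map_quasi_kernel[OF V \<phi>]])
  finally show ?thesis .
qed

lemma carrier_direct_sum:
  "carrier (direct_sum I V) = {x \<in> (\<Pi>\<^sub>E i\<in>I. carrier (V i)). finite {i \<in> I. x i \<noteq> \<one>\<^bsub>V i\<^esub>}}"
  by (simp add: direct_sum_def)

lemma mult_direct_sum: "x \<otimes>\<^bsub>direct_sum I V\<^esub> y = (\<lambda>i\<in>I. x i \<otimes>\<^bsub>V i\<^esub> y i)"
  by (simp add: direct_sum_def)

lemma one_direct_sum: "\<one>\<^bsub>direct_sum I V\<^esub> = (\<lambda>i\<in>I. \<one>\<^bsub>V i\<^esub>)"
  by (simp add: direct_sum_def)

lemma smult_direct_sum: "a \<odot>\<^bsub>direct_sum I V\<^esub> x = (\<lambda>i\<in>I. a \<odot>\<^bsub>V i\<^esub> x i)"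
  by (simp add: direct_sum_def)

lemma direct_sum_component:
  "x \<in> carrier (direct_sum I V) \<Longrightarrow> i \<in> I \<Longrightarrow> x i \<in> carrier (V i)"
  by (auto simp: carrier_direct_sum)

lemma direct_sum_eq_oneI:
  assumes "x \<in> carrier (direct_sum I V)" and "\<And>i. i \<in> I \<Longrightarrow> x i = \<one>\<^bsub>V i\<^esub>"
  shows "x = \<one>\<^bsub>direct_sum I V\<^esub>"
  using assms by (auto simp: carrier_direct_sum one_direct_sum PiE_iff intro: extensionalityI[where A=I])

lemma restrict_in_direct_sum:
  assumes "\<And>i. i \<in> I \<Longrightarrow> x i \<in> carrier (V i)" and "finite S"
    and "\<And>i. i \<in> I \<Longrightarrow> x i \<noteq> \<one>\<^bsub>V i\<^esub> \<Longrightarrow> i \<in> S"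
  shows "(\<lambda>i\<in>I. x i) \<in> carrier (direct_sum I V)"
  using assms by (auto simp: carrier_direct_sum intro: finite_subset)

lemma free_action_direct_sum:
  assumes free: "\<And>i. i \<in> I \<Longrightarrow> free_action F (V i)"
  shows "free_action F (direct_sum I V)"
  unfolding free_action_def
proof (intro ballI impI)
  fix u a b
  assume u: "u \<in> carrier (direct_sum I V)" and u_ne: "u \<noteq> \<one>\<^bsub>direct_sum I V\<^esub>"
    and a: "a \<in> carrier F" and b: "b \<in> carrier F"
    and eq: "a \<odot>\<^bsub>direct_sum I V\<^esub> u = b \<odot>\<^bsub>direct_sum I V\<^esub> u"
  obtain i where i: "i \<in> I" "u i \<noteq> \<one>\<^bsub>V i\<^esub>"
    using u u_ne direct_sum_eq_oneI by blast
  have "a \<odot>\<^bsub>V i\<^esub> u i = b \<odot>\<^bsub>V i\<^esub> u i"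
    using fun_cong[OF eq, of i] i(1) by (simp add: smult_direct_sum)
  moreover have "u i \<in> carrier (V i)" using u i(1) by (rule direct_sum_component)
  ultimately show "a = b" using free[OF i(1)] i(2) a b by (auto simp: free_action_def)
qed

definition ds_cotuple ::
    "'i set \<Rightarrow> ('w, 'm) monoid_scheme \<Rightarrow> ('i \<Rightarrow> 'v \<Rightarrow> 'w) \<Rightarrow> ('i \<Rightarrow> 'v) \<Rightarrow> 'w"
  where "ds_cotuple I W f x = gfinprod W (\<lambda>i. f i (x i)) I"

locale comm_group_family =
  fixes I :: "'i set" and V :: "'i \<Rightarrow> ('f, 'v) fspace"
  assumes comm_groups: "\<And>i. i \<in> I \<Longrightarrow> comm_group (V i)"
begin

lemma groups: "i \<in> I \<Longrightarrow> group (V i)"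
  by (simp add: comm_groups comm_group.axioms(2))

lemma direct_sum_truncate: "monoid.truncate (direct_sum I V) = sum_group I V"
  by (simp add: monoid.truncate_def direct_sum_def carrier_sum_group groups)

lemma comm_group_direct_sum: "comm_group (direct_sum I V)"
proof -
  have "comm_group (sum_group I V)"
  proof (rule group.group_comm_groupI)
    show "group (sum_group I V)" by (simp add: groups)
    show "x \<otimes>\<^bsub>sum_group I V\<^esub> y = y \<otimes>\<^bsub>sum_group I V\<^esub> x"
      if "x \<in> carrier (sum_group I V)" "y \<in> carrier (sum_group I V)" for x y
      using that by (auto simp: carrier_sum_group groups comm_groups comm_monoid.m_comm
          comm_group.axioms(1) PiE_iff intro: restrict_ext)
  qed
  then show ?thesis by (metis direct_sum_truncate comm_group_truncate_iff)
qed

lemma group_direct_sum: "group (direct_sum I V)"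
  by (simp add: comm_group_direct_sum comm_group.axioms(2))

lemma inv_direct_sum:
  "x \<in> carrier (direct_sum I V) \<Longrightarrow> inv\<^bsub>direct_sum I V\<^esub> x = (\<lambda>i\<in>I. inv\<^bsub>V i\<^esub> x i)"
  by (subst m_inv_truncate[symmetric])
    (simp add: direct_sum_truncate carrier_sum_group carrier_direct_sum groups)

lemma hom_direct_sum: "hom (direct_sum I V) W = hom (sum_group I V) W"
  by (subst hom_truncate[symmetric]) (simp only: direct_sum_truncate)

lemma ds_inj_hom: "i \<in> I \<Longrightarrow> ds_inj I V i \<in> hom (V i) (direct_sum I V)"
  unfolding ds_inj_def
  by (rule homI) (auto simp: mult_direct_sum groups group.is_monoid
      split: if_splits intro!: restrict_in_direct_sum[where S="{i}"] restrict_ext)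

lemma ds_inj_closed: "i \<in> I \<Longrightarrow> v \<in> carrier (V i) \<Longrightarrow> ds_inj I V i v \<in> carrier (direct_sum I V)"
  by (rule hom_in_carrier[OF ds_inj_hom])

lemma direct_sum_induct [consumes 1, case_names one step]:
  assumes x: "x \<in> carrier (direct_sum I V)"
    and one: "P \<one>\<^bsub>direct_sum I V\<^esub>"
    and step: "\<And>i v y. i \<in> I \<Longrightarrow> v \<in> carrier (V i) \<Longrightarrow> y \<in> carrier (direct_sum I V) \<Longrightarrow> P y \<Longrightarrow>
      P (ds_inj I V i v \<otimes>\<^bsub>direct_sum I V\<^esub> y)"
  shows "P x"
proof -
  have "P x" if "finite S" "x \<in> carrier (direct_sum I V)" "{i \<in> I. x i \<noteq> \<one>\<^bsub>V i\<^esub>} \<subseteq> S" for S x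
    using that
  proof (induction S arbitrary: x rule: finite_induct)
    case empty
    then show ?case using one direct_sum_eq_oneI by auto
  next
    case (insert j S)
    show ?case
    proof (cases "j \<in> I")
      case False
      with insert show ?thesis by (intro insert.IH) auto
    next
      case True
      define y where "y = (\<lambda>i\<in>I. if i = j then \<one>\<^bsub>V i\<^esub> else x i)"
      note x_i = direct_sum_component[OF insert.prems(1)]
      have y: "y \<in> carrier (direct_sum I V)"
        unfolding y_def using insert.prems insert.hyps(1)
        by (intro restrict_in_direct_sum[where S=S])
          (auto simp: x_i groups group.is_monoid monoid.one_closed split: if_splits)
      have "P y"
        by (rule insert.IH[OF y]) (use insert.prems(2) in \<open>auto simp: y_def\<close>)
      moreover have "x = ds_inj I V j (x j) \<otimes>\<^bsub>direct_sum I V\<^esub> y"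
        using insert.prems(1) True x_i
        by (intro extensionalityI[where A=I])
          (auto simp: ds_inj_def y_def mult_direct_sum carrier_direct_sum PiE_iff groups
            group.is_monoid monoid.l_one monoid.r_one)
      ultimately show ?thesis using step[OF True x_i[OF True] y] by simp
    qed
  qed
  then show ?thesis using x by (auto simp: carrier_direct_sum)
qed

lemma generate_ds_inj_images:
  "generate (direct_sum I V) (\<Union>i\<in>I. ds_inj I V i ` carrier (V i)) = carrier (direct_sum I V)"
    (is "generate ?D ?Q = _")
proof
  have "?Q \<subseteq> carrier ?D" using ds_inj_closed by blast
  then show "generate ?D ?Q \<subseteq> carrier ?D" by (rule group.generate_incl[OF group_direct_sum])
  show "carrier ?D \<subseteq> generate ?D ?Q"
  proof
    fix x assume "x \<in> carrier ?D"
    then show "x \<in> generate ?D ?Q"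
    proof (induction rule: direct_sum_induct)
      case one
      then show ?case by (rule generate.one)
    next
      case (step i v y)
      then show ?case by (blast intro: generate.eng generate.incl)
    qed
  qed
qed

lemma hom_direct_sum_eqI:
  assumes W: "group W" and h1: "h1 \<in> hom (direct_sum I V) W" and h2: "h2 \<in> hom (direct_sum I V) W"
    and eq: "\<And>i v. i \<in> I \<Longrightarrow> v \<in> carrier (V i) \<Longrightarrow> h1 (ds_inj I V i v) = h2 (ds_inj I V i v)"
    and x: "x \<in> carrier (direct_sum I V)"
  shows "h1 x = h2 x"
  using x
proof (induction rule: direct_sum_induct)
  case one
  then show ?case using hom_one[OF h1 group_direct_sum W] hom_one[OF h2 group_direct_sum W] by simp
next
  case (step i v y)
  then show ?case using eq ds_inj_closed by (simp add: hom_mult[OF h1] hom_mult[OF h2])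
qed

lemma ds_cotuple_hom:
  assumes W: "comm_group W" and f: "\<And>i. i \<in> I \<Longrightarrow> f i \<in> hom (V i) W"
  shows "ds_cotuple I W f \<in> hom (direct_sum I V) W"
  using comm_group.hom_group_sum[OF W f groups]
  by (simp add: hom_direct_sum ds_cotuple_def[abs_def])

lemma ds_cotuple_ds_inj:
  assumes W: "comm_group W" and f: "\<And>i. i \<in> I \<Longrightarrow> f i \<in> hom (V i) W"
    and i: "i \<in> I" and v: "v \<in> carrier (V i)"
  shows "ds_cotuple I W f (ds_inj I V i v) = f i v"
proof -
  interpret W: comm_group W by (rule W)
  have f_one: "f j \<one>\<^bsub>V j\<^esub> = \<one>\<^bsub>W\<^esub>" if "j \<in> I" for j
    using hom_one[OF f groups W.is_group] that by blast
  have "ds_cotuple I W f (ds_inj I V i v) = gfinprod W (\<lambda>j. f j (ds_inj I V i v j)) {i}"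
    unfolding ds_cotuple_def
    by (rule W.gfinprod_mono_neutral_cong_right)
      (use i v f_one in \<open>auto simp: ds_inj_def groups group.is_monoid
        intro: hom_in_carrier[OF f] monoid.one_closed\<close>)
  also have "\<dots> = f i v"
    using i v by (simp add: ds_inj_def hom_in_carrier[OF f])
  finally show ?thesis .
qed

end

locale fspace_family =
  fixes F :: "'f monoid" and z n :: 'f and I :: "'i set" and V :: "'i \<Rightarrow> ('f, 'v) fspace"
  assumes fspaces: "\<And>i. i \<in> I \<Longrightarrow> is_fspace F z n (V i)"

sublocale fspace_family \<subseteq> comm_group_family I V
  using fspaces by (simp add: comm_group_family_def is_fspace_def)

context fspace_family
begin

lemma is_fspace_direct_sum: "is_fspace F z n (direct_sum I V)"
proof -
  note fspace_axioms = fspaces[unfolded is_fspace_def]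
  show ?thesis
    unfolding is_fspace_def
  proof (intro conjI ballI)
    show "comm_group (direct_sum I V)" by (rule comm_group_direct_sum)
  next
    fix a x assume a: "a \<in> carrier F" and x: "x \<in> carrier (direct_sum I V)"
    then show "a \<odot>\<^bsub>direct_sum I V\<^esub> x \<in> carrier (direct_sum I V)"
      unfolding smult_direct_sum
      by (intro restrict_in_direct_sum[where S="{i \<in> I. x i \<noteq> \<one>\<^bsub>V i\<^esub>}"])
        (auto simp: carrier_direct_sum direct_sum_component[OF x] fspace_smult_one[OF fspaces]
          fspace_smult_closed[OF fspaces])
  next
    fix a u v assume "a \<in> carrier F" "u \<in> carrier (direct_sum I V)" "v \<in> carrier (direct_sum I V)"
    then show "a \<odot>\<^bsub>direct_sum I V\<^esub> (u \<otimes>\<^bsub>direct_sum I V\<^esub> v) =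
        (a \<odot>\<^bsub>direct_sum I V\<^esub> u) \<otimes>\<^bsub>direct_sum I V\<^esub> (a \<odot>\<^bsub>direct_sum I V\<^esub> v)"
      unfolding smult_direct_sum mult_direct_sum
      by (intro restrict_ext) (simp add: fspace_axioms direct_sum_component)
  next
    fix a b x assume "a \<in> carrier F" "b \<in> carrier F" "x \<in> carrier (direct_sum I V)"
    then show "(a \<otimes>\<^bsub>F\<^esub> b) \<odot>\<^bsub>direct_sum I V\<^esub> x =
        a \<odot>\<^bsub>direct_sum I V\<^esub> (b \<odot>\<^bsub>direct_sum I V\<^esub> x)"
      unfolding smult_direct_sum
      by (intro restrict_ext) (simp add: fspace_axioms direct_sum_component)
  next
    fix x assume x: "x \<in> carrier (direct_sum I V)"
    have "x \<in> extensional I" using x by (simp add: carrier_direct_sum PiE_iff)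
    then show "\<one>\<^bsub>F\<^esub> \<odot>\<^bsub>direct_sum I V\<^esub> x = x"
      unfolding smult_direct_sum
      by (intro extensionalityI[where A=I]) (simp_all add: fspace_axioms direct_sum_component[OF x])
    show "z \<odot>\<^bsub>direct_sum I V\<^esub> x = \<one>\<^bsub>direct_sum I V\<^esub>"
      unfolding smult_direct_sum one_direct_sum
      by (intro restrict_ext) (simp add: fspace_axioms direct_sum_component[OF x])
    show "n \<odot>\<^bsub>direct_sum I V\<^esub> x = inv\<^bsub>direct_sum I V\<^esub> x"
      unfolding smult_direct_sum inv_direct_sum[OF x]
      by (simp add: fspace_axioms direct_sum_component[OF x] cong: restrict_cong)
  qed
qed

lemma linear_map_ds_inj: "i \<in> I \<Longrightarrow> linear_map F (V i) (direct_sum I V) (ds_inj I V i)"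
  unfolding linear_map_def
  by (simp add: ds_inj_hom)
    (auto simp: ds_inj_def smult_direct_sum fspace_smult_one[OF fspaces] intro!: restrict_ext)

lemma generate_quasi_kernel_direct_sum:
  assumes gen: "\<And>i. i \<in> I \<Longrightarrow> generate (V i) (quasi_kernel F (V i)) = carrier (V i)"
  shows "generate (direct_sum I V) (quasi_kernel F (direct_sum I V)) = carrier (direct_sum I V)"
    (is "generate ?D ?Q = _")
proof
  interpret D: group ?D by (rule group_direct_sum)
  have Q: "?Q \<subseteq> carrier ?D" by (auto simp: quasi_kernel_def)
  then show "generate ?D ?Q \<subseteq> carrier ?D" by (rule D.generate_incl)
  have "ds_inj I V i ` carrier (V i) \<subseteq> generate ?D ?Q" if i: "i \<in> I" for i
    using linear_map_generate_quasi_kernel[OF fspaces[OF i] is_fspace_direct_sum linear_map_ds_inj[OF i]]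
    by (simp add: gen[OF i])
  then have "generate ?D (\<Union>i\<in>I. ds_inj I V i ` carrier (V i)) \<subseteq> generate ?D ?Q"
    by (intro D.generate_subgroup_incl D.generate_is_subgroup[OF Q]) blast
  then show "carrier ?D \<subseteq> generate ?D ?Q" by (simp add: generate_ds_inj_images)
qed

lemma linear_map_ds_cotuple:
  fixes W :: "('f, 'w) fspace"
  assumes W: "is_fspace F z n W" and f: "\<And>i. i \<in> I \<Longrightarrow> linear_map F (V i) W (f i)"
  shows "linear_map F (direct_sum I V) W (ds_cotuple I W f)"
proof -
  have W_comm: "comm_group W" using W by (simp add: is_fspace_def)
  have f_hom: "\<And>i. i \<in> I \<Longrightarrow> f i \<in> hom (V i) W" using f by (simp add: linear_map_def)
  have hom: "ds_cotuple I W f \<in> hom (direct_sum I V) W"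
    by (rule ds_cotuple_hom[OF W_comm f_hom])
  have "ds_cotuple I W f (a \<odot>\<^bsub>direct_sum I V\<^esub> x) = a \<odot>\<^bsub>W\<^esub> ds_cotuple I W f x"
    if a: "a \<in> carrier F" and x: "x \<in> carrier (direct_sum I V)" for a x
  proof -
    \<comment> \<open>Both sides are homomorphisms in \<open>x\<close> that agree on the injections.\<close>
    let ?h1 = "ds_cotuple I W f \<circ> (\<lambda>x. a \<odot>\<^bsub>direct_sum I V\<^esub> x)"
    let ?h2 = "(\<lambda>w. a \<odot>\<^bsub>W\<^esub> w) \<circ> ds_cotuple I W f"
    have "?h1 x = ?h2 x"
    proof (rule hom_direct_sum_eqI[OF comm_group.axioms(2)[OF W_comm] _ _ _ x])
      show "?h1 \<in> hom (direct_sum I V) W"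
        by (rule hom_compose[OF fspace_smult_hom[OF is_fspace_direct_sum a] hom])
      show "?h2 \<in> hom (direct_sum I V) W"
        by (rule hom_compose[OF hom fspace_smult_hom[OF W a]])
    next
      fix i v assume i: "i \<in> I" and v: "v \<in> carrier (V i)"
      have "?h1 (ds_inj I V i v) = ds_cotuple I W f (ds_inj I V i (a \<odot>\<^bsub>V i\<^esub> v))"
        using linear_map_ds_inj[OF i] a v by (simp add: linear_map_def)
      also have "\<dots> = f i (a \<odot>\<^bsub>V i\<^esub> v)"
        using i a v by (simp add: ds_cotuple_ds_inj[OF W_comm f_hom] fspace_smult_closed[OF fspaces])
      also have "\<dots> = a \<odot>\<^bsub>W\<^esub> f i v"
        using f[OF i] a v by (simp add: linear_map_def)
      also have "\<dots> = ?h2 (ds_inj I V i v)"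
        by (simp add: ds_cotuple_ds_inj[OF W_comm f_hom i v])
      finally show "?h1 (ds_inj I V i v) = ?h2 (ds_inj I V i v)" .
    qed
    then show ?thesis by simp
  qed
  with hom show ?thesis by (simp add: linear_map_def)
qed

lemma ex_linear_map_extending:
  fixes W :: "('f, 'w) fspace"
  assumes W: "is_fspace F z n W" and f: "\<And>i. i \<in> I \<Longrightarrow> linear_map F (V i) W (f i)"
  shows "\<exists>\<psi>. linear_map F (direct_sum I V) W \<psi> \<and>
    (\<forall>i\<in>I. \<forall>v\<in>carrier (V i). \<psi> (ds_inj I V i v) = f i v)"
proof -
  have W_comm: "comm_group W" and f_hom: "\<And>i. i \<in> I \<Longrightarrow> f i \<in> hom (V i) W"
    using W f by (simp_all add: is_fspace_def linear_map_def)
  show ?thesis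
    using linear_map_ds_cotuple[OF W f] ds_cotuple_ds_inj[OF W_comm f_hom] by blast
qed

lemma linear_map_direct_sum_eqI:
  fixes W :: "('f, 'w) fspace"
  assumes "is_fspace F z n W"
    and "linear_map F (direct_sum I V) W \<psi>1" and "linear_map F (direct_sum I V) W \<psi>2"
    and "\<And>i v. i \<in> I \<Longrightarrow> v \<in> carrier (V i) \<Longrightarrow> \<psi>1 (ds_inj I V i v) = \<psi>2 (ds_inj I V i v)"
    and "x \<in> carrier (direct_sum I V)"
  shows "\<psi>1 x = \<psi>2 x"
  using assms by (intro hom_direct_sum_eqI[of W \<psi>1 \<psi>2 x])
    (simp_all add: is_fspace_def linear_map_def comm_group.axioms(2))

end

lemma near_vector_space_direct_sum:
  assumes "\<And>i. i \<in> I \<Longrightarrow> near_vector_space F z n (V i)"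
  shows "near_vector_space F z n (direct_sum I V)"
proof -
  interpret fspace_family F z n I V
    using assms by (simp add: fspace_family_def near_vector_space_iff)
  have "free_action F (direct_sum I V)"
    using assms by (intro free_action_direct_sum) (simp add: near_vector_space_iff)
  then show ?thesis
    using assms is_fspace_direct_sum generate_quasi_kernel_direct_sum
    by (simp add: near_vector_space_iff)
qed

theorem mainTheorem3:
  fixes F :: "'f monoid" and z n :: 'f
    and I :: "'i set" and V :: "'i \<Rightarrow> ('f, 'v) fspace"
  assumes "scalar_group F z n"
    and "\<forall>i\<in>I. near_vector_space F z n (V i)"
  shows "near_vector_space F z n (direct_sum I V)
       \<and> (\<forall>i\<in>I. linear_map F (V i) (direct_sum I V) (ds_inj I V i))
       \<and> (\<forall>(W :: ('f, 'w) fspace) (f :: 'i \<Rightarrow> 'v \<Rightarrow> 'w).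
            near_vector_space F z n W \<and> (\<forall>i\<in>I. linear_map F (V i) W (f i)) \<longrightarrow>
            (\<exists>\<psi>. linear_map F (direct_sum I V) W \<psi> \<and>
                 (\<forall>i\<in>I. \<forall>v\<in>carrier (V i). \<psi> (ds_inj I V i v) = f i v)) \<and>
            (\<forall>\<psi>1 \<psi>2. linear_map F (direct_sum I V) W \<psi>1 \<and>
                 (\<forall>i\<in>I. \<forall>v\<in>carrier (V i). \<psi>1 (ds_inj I V i v) = f i v) \<and>
                 linear_map F (direct_sum I V) W \<psi>2 \<and>
                 (\<forall>i\<in>I. \<forall>v\<in>carrier (V i). \<psi>2 (ds_inj I V i v) = f i v) \<longrightarrow>
                 (\<forall>x\<in>carrier (direct_sum I V). \<psi>1 x = \<psi>2 x)))"
proof -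
  interpret fspace_family F z n I V
    using assms(2) by (simp add: fspace_family_def near_vector_space_iff)
  show ?thesis
  proof (intro conjI ballI allI impI)
    show "near_vector_space F z n (direct_sum I V)"
      using assms(2) by (intro near_vector_space_direct_sum) blast
    show "linear_map F (V i) (direct_sum I V) (ds_inj I V i)" if "i \<in> I" for i
      using that by (rule linear_map_ds_inj)
    fix W :: "('f, 'w) fspace" and f :: "'i \<Rightarrow> 'v \<Rightarrow> 'w"
    assume "near_vector_space F z n W \<and> (\<forall>i\<in>I. linear_map F (V i) W (f i))"
    then have W: "is_fspace F z n W" and f: "\<And>i. i \<in> I \<Longrightarrow> linear_map F (V i) W (f i)"
      by (simp_all add: near_vector_space_iff)
    then show "\<exists>\<psi>. linear_map F (direct_sum I V) W \<psi> \<and>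
        (\<forall>i\<in>I. \<forall>v\<in>carrier (V i). \<psi> (ds_inj I V i v) = f i v)"
      by (rule ex_linear_map_extending)
    fix \<psi>1 \<psi>2 x
    assume "linear_map F (direct_sum I V) W \<psi>1 \<and>
        (\<forall>i\<in>I. \<forall>v\<in>carrier (V i). \<psi>1 (ds_inj I V i v) = f i v) \<and>
        linear_map F (direct_sum I V) W \<psi>2 \<and>
        (\<forall>i\<in>I. \<forall>v\<in>carrier (V i). \<psi>2 (ds_inj I V i v) = f i v)"
      and "x \<in> carrier (direct_sum I V)"
    then show "\<psi>1 x = \<psi>2 x" by (intro linear_map_direct_sum_eqI[OF W, of \<psi>1 \<psi>2 x]) auto
  qed
qed

end
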